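(* Let $K$ be a field, $\mathcal A$ a $K$-algebra, $\vartheta$ any one of the four types (left, right, pre-two-sided, two-sided), and $V$ a $K$-subspace of $\mathcal A$ such that every element of $\sqrt V$ is algebraic over $K$ and $I_{\vartheta,V}=0$. Then $V$ is a $\vartheta$-Mathieu subspace of $\mathcal A$ if and only if $V$ contains no nonzero idempotent. Consequently, if $\vartheta\neq$ pre-two-sided and $\mathcal A$ is an algebraic $K$-algebra with no non-trivial $\vartheta$-ideals, then a non-trivial $K$-subspace $M$ of $\mathcal A$ is a $\vartheta$-Mathieu subspace of $\mathcal A$ if and only if $M$ contains no nonzero idempotent of $\mathcal A$.
   Context: All algebras are associative and unital. $\sqrt S$ is the set of $a\in\mathcal A$ with $a^m\in S$ for all sufficiently large $m$. An idempotent is $e$ with $e^2=e$. A subspace is non-trivial if it is neither $0$ nor $\mathcal A$. $\mathcal A$ is algebraic if every element is algebraic over $K$. A $\vartheta$-ideal is a left ideal if $\vartheta$ = left, right ideal if $\vartheta$ = right, two-sided ideal if $\vartheta$ is pre-two-sided or two-sided. For $\vartheta\neq$ pre-two-sided, $I_{\vartheta,V}$ is the largest $\vartheta$-ideal of $\mathcal A$ contained in $V$ (the sum of all $\vartheta$-ideals contained in $V$); for $\vartheta$ = pre-two-sided, $I_{\vartheta,V}$ is the sum of the largest left ideal contained in $V$ and the largest right ideal contained in $V$. Mathieu subspaces: a $K$-subspace $V$ is a left (resp. right) Mathieu subspace if whenever $a^m\in V$ for all $m\ge1$, then for every $b\in\mathcal A$, $ba^m\in V$ (resp. $a^mb\in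 V$) for all sufficiently large $m$; pre-two-sided if both left and right; two-sided if whenever $a^m\in V$ for all $m\ge1$, for all $b,c$, $ba^mc\in V$ for all sufficiently large $m$. *)

theory Defs
  imports Main "HOL-Computational_Algebra.Polynomial"
begin

definition is_algebra :: "('k::field \<Rightarrow> 'a::ring_1 \<Rightarrow> 'a) \<Rightarrow> bool" where
  "is_algebra scale \<longleftrightarrow> vector_space scale \<and>
     (\<forall>c x y. scale c (x * y) = scale c x * y \<and> scale c (x * y) = x * scale c y)"

definition poly_eval :: "('k::field \<Rightarrow> 'a::ring_1 \<Rightarrow> 'a) \<Rightarrow> 'k poly \<Rightarrow> 'a \<Rightarrow> 'a" where
  "poly_eval scale p a = (\<Sum>i\<le>degree p. scale (coeff p i) (a ^ i))"

definition algebraic_elem :: "('k::field \<Rightarrow> 'a::ring_1 \<Rightarrow> 'a) \<Rightarrow> 'a \<Rightarrow> bool" where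
  "algebraic_elem scale a \<longleftrightarrow> (\<exists>p::'k poly. p \<noteq> 0 \<and> poly_eval scale p a = 0)"

definition algebraic_algebra :: "('k::field \<Rightarrow> 'a::ring_1 \<Rightarrow> 'a) \<Rightarrow> bool" where
  "algebraic_algebra scale \<longleftrightarrow> (\<forall>a. algebraic_elem scale a)"

definition radical :: "'a::ring_1 set \<Rightarrow> 'a set" where
  "radical S = {a. \<exists>N. \<forall>m\<ge>N. a ^ m \<in> S}"

definition idempotent :: "'a::ring_1 \<Rightarrow> bool" where
  "idempotent e \<longleftrightarrow> e * e = e"

datatype mtype = LeftT | RightT | PreTwoSidedT | TwoSidedT

definition left_ideal :: "('k::field \<Rightarrow> 'a::ring_1 \<Rightarrow> 'a) \<Rightarrow> 'a set \<Rightarrow> bool" where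
  "left_ideal scale I \<longleftrightarrow> module.subspace scale I \<and> (\<forall>b\<in>UNIV. \<forall>a\<in>I. b * a \<in> I)"

definition right_ideal :: "('k::field \<Rightarrow> 'a::ring_1 \<Rightarrow> 'a) \<Rightarrow> 'a set \<Rightarrow> bool" where
  "right_ideal scale I \<longleftrightarrow> module.subspace scale I \<and> (\<forall>b\<in>UNIV. \<forall>a\<in>I. a * b \<in> I)"

definition two_sided_ideal :: "('k::field \<Rightarrow> 'a::ring_1 \<Rightarrow> 'a) \<Rightarrow> 'a set \<Rightarrow> bool" where
  "two_sided_ideal scale I \<longleftrightarrow> left_ideal scale I \<and> right_ideal scale I"

definition theta_ideal :: "mtype \<Rightarrow> ('k::field \<Rightarrow> 'a::ring_1 \<Rightarrow> 'a) \<Rightarrow> 'a set \<Rightarrow> bool" where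
  "theta_ideal t scale I = (case t of
       LeftT \<Rightarrow> left_ideal scale I
     | RightT \<Rightarrow> right_ideal scale I
     | PreTwoSidedT \<Rightarrow> two_sided_ideal scale I
     | TwoSidedT \<Rightarrow> two_sided_ideal scale I)"

definition I_theta :: "mtype \<Rightarrow> ('k::field \<Rightarrow> 'a::ring_1 \<Rightarrow> 'a) \<Rightarrow> 'a set \<Rightarrow> 'a set" where
  "I_theta t scale V = (if t = PreTwoSidedT
     then module.span scale (\<Union>{I. left_ideal scale I \<and> I \<subseteq> V} \<union>
                            \<Union>{I. right_ideal scale I \<and> I \<subseteq> V})
     else module.span scale (\<Union>{I. theta_ideal t scale I \<and> I \<subseteq> V}))"

definition left_mathieu :: "'a::ring_1 set \<Rightarrow> bool" where
  "left_mathieu V \<longleftrightarrow> (\<forall>a. (\<forall>m\<ge>1. a ^ m \<in> V) \<longrightarrow> (\<forall>b. \<exists>N. \<forall>m\<ge>N. b * a ^ m \<in> V))"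

definition right_mathieu :: "'a::ring_1 set \<Rightarrow> bool" where
  "right_mathieu V \<longleftrightarrow> (\<forall>a. (\<forall>m\<ge>1. a ^ m \<in> V) \<longrightarrow> (\<forall>b. \<exists>N. \<forall>m\<ge>N. a ^ m * b \<in> V))"

definition two_sided_mathieu :: "'a::ring_1 set \<Rightarrow> bool" where
  "two_sided_mathieu V \<longleftrightarrow>
     (\<forall>a. (\<forall>m\<ge>1. a ^ m \<in> V) \<longrightarrow> (\<forall>b c. \<exists>N. \<forall>m\<ge>N. b * a ^ m * c \<in> V))"

text \<open>theta-Mathieu subspace (V is assumed to be a K-subspace separately).\<close>
definition theta_mathieu :: "mtype \<Rightarrow> 'a::ring_1 set \<Rightarrow> bool" where
  "theta_mathieu t V = (case t of
       LeftT \<Rightarrow> left_mathieu V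
     | RightT \<Rightarrow> right_mathieu V
     | PreTwoSidedT \<Rightarrow> left_mathieu V \<and> right_mathieu V
     | TwoSidedT \<Rightarrow> two_sided_mathieu V)"

end

theory Submission imports Defs begin

text \<open>If \<open>V\<close> contains an idempotent \<open>e\<close>, then all powers \<open>e^m = e\<close> lie in \<open>V\<close>, so the
  Mathieu property puts the \<open>\<vartheta>\<close>-ideal generated by \<open>e\<close> into \<open>V\<close>, hence into \<open>I_\<vartheta>,V = 0\<close>.
  Conversely, let all positive powers of an algebraic \<open>a\<close> lie in \<open>V\<close>. If \<open>c_k\<close> is the lowest
  nonzero coefficient of a polynomial killing \<open>a\<close>, then \<open>a^k = a^(k+1) w\<close> for a polynomial \<open>w\<close>
  in \<open>a\<close>, and \<open>e = a^(k+1) w^(k+1)\<close> is an idempotent in the span of the positive powers of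
  \<open>a\<close> with \<open>e a^(k+1) = a^(k+1)\<close>. So if \<open>V\<close> contains no nonzero idempotent, \<open>a\<close> is
  nilpotent, and nilpotent elements satisfy every Mathieu condition trivially.\<close>

lemma idempotent_power: "idempotent e \<Longrightarrow> m \<ge> 1 \<Longrightarrow> e ^ m = e"
proof (induction m)
  case (Suc m)
  then show ?case by (cases "m = 0") (auto simp: idempotent_def power_Suc2)
qed simp

lemma idempotent_eventually_power:
  assumes "idempotent e" and "\<exists>N. \<forall>m\<ge>N. P (e ^ m)"
  shows "P e"
  using assms idempotent_power[OF assms(1), of "max N 1" for N] by (metis max.cobounded1 max.cobounded2)

lemma idempotent_of_power_eq:
  fixes a w :: "'a::ring_1"
  assumes comm: "a * w = w * a" and eq: "a ^ Suc k * w = a ^ k"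
  defines "e \<equiv> a ^ Suc k * w ^ Suc k"
  shows "idempotent e" and "e * a ^ Suc k = a ^ Suc k"
proof -
  have absorb: "a ^ (Suc k + n) * w ^ n = a ^ Suc k" for n
  proof (induction n)
    case (Suc n)
    have "a ^ (Suc k + Suc n) = a ^ Suc n * a ^ Suc k"
      by (metis power_add add.commute)
    then have "a ^ (Suc k + Suc n) * w ^ Suc n = a ^ Suc n * (a ^ Suc k * w) * w ^ n"
      by (simp add: mult.assoc)
    also have "\<dots> = a ^ Suc n * a ^ k * w ^ n"
      by (simp only: eq)
    also have "\<dots> = a ^ (Suc k + n) * w ^ n"
      by (metis power_add add.commute add_Suc)
    finally show ?case using Suc by simp
  qed simp
  have w_power_comm: "w ^ n * a ^ m = a ^ m * w ^ n" for n m
    using comm by (metis power_commuting_commutes)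
  have "e * a ^ Suc k = a ^ Suc k * a ^ Suc k * w ^ Suc k"
    unfolding e_def by (simp only: mult.assoc w_power_comm)
  also have "\<dots> = a ^ Suc k"
    using absorb[of "Suc k"] by (simp only: power_add)
  finally show "e * a ^ Suc k = a ^ Suc k" .
  then show "idempotent e"
    unfolding idempotent_def e_def by (metis mult.assoc)
qed

lemma theta_mathieu_if_powers_nilpotent:
  fixes V :: "'a::ring_1 set"
  assumes "0 \<in> V" and nilpotent: "\<And>a. \<forall>m\<ge>1. a ^ m \<in> V \<Longrightarrow> \<exists>k. a ^ k = 0"
  shows "theta_mathieu t V"
proof -
  have eventually_zero: "\<exists>N. \<forall>m\<ge>N. a ^ m = 0" if powers: "\<forall>m\<ge>1. a ^ m \<in> V" for a
  proof -
    obtain k where "a ^ k = 0" using nilpotent[OF powers] by blast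
    then have "a ^ m = 0" if "m \<ge> k" for m
      using that by (metis le_add_diff_inverse mult_zero_left power_add)
    then show ?thesis by blast
  qed
  then have "left_mathieu V" and "right_mathieu V" and "two_sided_mathieu V"
    using \<open>0 \<in> V\<close> unfolding left_mathieu_def right_mathieu_def two_sided_mathieu_def
    by (metis mult_zero_right, metis mult_zero_left, metis mult_zero_left mult_zero_right)
  then show ?thesis
    unfolding theta_mathieu_def by (simp split: mtype.split)
qed

locale k_algebra = vector_space scale for scale :: "'k::field \<Rightarrow> 'a::ring_1 \<Rightarrow> 'a" +
  assumes scale_mult_left: "scale c (x * y) = scale c x * y"
    and scale_mult_right: "scale c (x * y) = x * scale c y"

lemma k_algebra_iff_is_algebra: "k_algebra scale \<longleftrightarrow> is_algebra scale"
  unfolding k_algebra_def k_algebra_axioms_def is_algebra_def by blast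

context k_algebra
begin

lemma span_mult_mem:
  assumes "\<And>u v. u \<in> A \<Longrightarrow> v \<in> B \<Longrightarrow> u * v \<in> span C"
    and "x \<in> span A" and "y \<in> span B"
  shows "x * y \<in> span C"
  using assms(2)
proof (induction x rule: span_induct_alt)
  case (step c u x)
  have "u * y \<in> span C"
    using assms(3)
  proof (induction y rule: span_induct_alt)
    case (step d v y)
    then show ?case
      using assms(1)[OF \<open>u \<in> A\<close>]
      by (simp add: distrib_left scale_mult_right[symmetric] span_add span_scale)
  qed (simp add: span_zero)
  then show ?case
    using step by (simp add: distrib_right scale_mult_left[symmetric] span_add span_scale)
qed (simp add: span_zero)

lemma commute_span:
  assumes "\<And>v. v \<in> B \<Longrightarrow> u * v = v * u" and "y \<in> span B"
  shows "u * y = y * u"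
  using assms(2)
  by (induction y rule: span_induct_alt)
    (simp_all add: assms(1) distrib_left distrib_right scale_mult_left[symmetric]
      scale_mult_right[symmetric])

lemma algebraic_power_eq:
  assumes "algebraic_elem scale a"
  shows "\<exists>k. \<exists>w\<in>span (range (power a)). a ^ Suc k * w = a ^ k"
proof -
  obtain p where "p \<noteq> 0" and root: "poly_eval scale p a = 0"
    using assms unfolding algebraic_elem_def by blast
  define d where "d = degree p"
  define k where "k = (LEAST i. coeff p i \<noteq> 0)"
  define c where "c = coeff p k"
  have "coeff p d \<noteq> 0" using \<open>p \<noteq> 0\<close> by (simp add: d_def)
  then have "c \<noteq> 0" and "k \<le> d"
    unfolding c_def k_def by (metis (mono_tags) LeastI, metis (mono_tags) Least_le)
  have below_k: "coeff p i = 0" if "i < k" for i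
    using that not_less_Least unfolding k_def by blast
  define tail where "tail = (\<Sum>i\<in>{k<..d}. scale (coeff p i) (a ^ i))"
  have split: "{..d} = {..<k} \<union> ({k} \<union> {k<..d})" using \<open>k \<le> d\<close> by auto
  have "poly_eval scale p a
      = (\<Sum>i<k. scale (coeff p i) (a ^ i)) + (scale c (a ^ k) + tail)"
    unfolding poly_eval_def d_def[symmetric] tail_def c_def split
    by (subst sum.union_disjoint) auto
  then have lowest: "scale c (a ^ k) + tail = 0"
    using root below_k by simp
  define w where "w = (\<Sum>i\<in>{k<..d}. scale (- coeff p i / c) (a ^ (i - Suc k)))"
  have "a ^ Suc k * w = (\<Sum>i\<in>{k<..d}. scale (- 1 / c) (scale (coeff p i) (a ^ i)))"
    unfolding w_def sum_distrib_left scale_mult_right[symmetric]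
  proof (rule sum.cong)
    fix i assume "i \<in> {k<..d}"
    then have "a ^ Suc k * a ^ (i - Suc k) = a ^ i"
      by (metis power_add le_add_diff_inverse Suc_le_eq greaterThanAtMost_iff)
    then show "scale (- coeff p i / c) (a ^ Suc k * a ^ (i - Suc k))
      = scale (- 1 / c) (scale (coeff p i) (a ^ i))" by simp
  qed simp
  also have "\<dots> = scale (- 1 / c) tail"
    by (simp only: tail_def scale_sum_right)
  also have "\<dots> = scale (- 1 / c) (- scale c (a ^ k))"
    using lowest by (metis add.commute add_eq_0_iff)
  also have "\<dots> = a ^ k" using \<open>c \<noteq> 0\<close> by simp
  finally have "a ^ Suc k * w = a ^ k" .
  moreover have "w \<in> span (range (power a))"
    unfolding w_def by (intro span_sum span_scale span_base) simp
  ultimately show ?thesis by blast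
qed

lemma nilpotent_if_powers_in_subspace:
  assumes "subspace V" and no_idempotent: "\<forall>e\<in>V. idempotent e \<longrightarrow> e = 0"
    and powers: "\<forall>m\<ge>1. a ^ m \<in> V" and "algebraic_elem scale a"
  shows "\<exists>k. a ^ k = 0"
proof -
  obtain k w where w: "w \<in> span (range (power a))" and eq: "a ^ Suc k * w = a ^ k"
    using algebraic_power_eq[OF \<open>algebraic_elem scale a\<close>] by blast
  have comm: "a * w = w * a"
    by (rule commute_span[OF _ w]) (auto simp: power_commutes)
  define P where "P = span (range (\<lambda>j. a ^ Suc j))"
  have "P \<subseteq> V"
    unfolding P_def using powers \<open>subspace V\<close> by (intro span_minimal) auto
  have "a ^ Suc k * w ^ n \<in> P" for n
  proof (induction n)
    case 0
    then show ?case unfolding P_def by (auto intro: span_base)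
  next
    case (Suc n)
    have "u * v \<in> span (range (\<lambda>j. a ^ Suc j))"
      if u: "u \<in> range (\<lambda>j. a ^ Suc j)" and v: "v \<in> range (power a)" for u v
    proof -
      obtain i j where "u = a ^ Suc i" and "v = a ^ j" using u v by blast
      then have "u * v = a ^ Suc (i + j)" by (simp add: power_add mult.assoc)
      then show ?thesis by (simp add: span_base)
    qed
    then have "(a ^ Suc k * w ^ n) * w \<in> P"
      unfolding P_def by (rule span_mult_mem[OF _ Suc[unfolded P_def] w])
    then show ?case by (simp only: power_Suc2 mult.assoc)
  qed
  then have "a ^ Suc k * w ^ Suc k = 0"
    using \<open>P \<subseteq> V\<close> no_idempotent idempotent_of_power_eq(1)[OF comm eq] by blast
  then have "a ^ Suc k = 0"
    using idempotent_of_power_eq(2)[OF comm eq] by simp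
  then show ?thesis ..
qed

lemma left_ideal_range_mult: "left_ideal scale (range (\<lambda>b. b * e))"
proof -
  have "0 \<in> range (\<lambda>b. b * e)" by (rule range_eqI[where x=0]) simp
  moreover have "x * e + y * e \<in> range (\<lambda>b. b * e)" for x y
    by (rule range_eqI[where x="x + y"]) (simp add: distrib_right)
  moreover have "scale c (x * e) \<in> range (\<lambda>b. b * e)" for c x
    by (rule range_eqI[where x="scale c x"]) (simp add: scale_mult_left)
  moreover have "y * (x * e) \<in> range (\<lambda>b. b * e)" for x y
    by (rule range_eqI[where x="y * x"]) (simp add: mult.assoc)
  ultimately show ?thesis unfolding left_ideal_def subspace_def by blast
qed

lemma right_ideal_range_mult: "right_ideal scale (range (\<lambda>b. e * b))"
proof -
  have "0 \<in> range (\<lambda>b. e * b)" by (rule range_eqI[where x=0]) simp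
  moreover have "e * x + e * y \<in> range (\<lambda>b. e * b)" for x y
    by (rule range_eqI[where x="x + y"]) (simp add: distrib_left)
  moreover have "scale c (e * x) \<in> range (\<lambda>b. e * b)" for c x
    by (rule range_eqI[where x="scale c x"]) (simp add: scale_mult_right)
  moreover have "e * x * y \<in> range (\<lambda>b. e * b)" for x y
    by (rule range_eqI[where x="x * y"]) (simp add: mult.assoc)
  ultimately show ?thesis unfolding right_ideal_def subspace_def by blast
qed

lemma two_sided_ideal_span_sandwich: "two_sided_ideal scale (span (range (\<lambda>(b, c). b * e * c)))"
proof -
  let ?G = "range (\<lambda>(b, c). b * e * c)"
  have "d * x \<in> span ?G" and "x * d \<in> span ?G" if "x \<in> span ?G" for d x
  proof -
    have "d * (b * e * c) \<in> ?G" for b c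
      by (rule range_eqI[where x="(d * b, c)"]) (simp add: mult.assoc)
    then show "d * x \<in> span ?G"
      by (intro span_mult_mem[where A = "{d}" and B = ?G, OF _ span_base that]) (auto intro: span_base)
    have "b * e * c * d \<in> ?G" for b c
      by (rule range_eqI[where x="(b, c * d)"]) (simp add: mult.assoc)
    then show "x * d \<in> span ?G"
      by (intro span_mult_mem[where A = ?G and B = "{d}", OF _ that span_base]) (auto intro: span_base)
  qed
  then show ?thesis
    unfolding two_sided_ideal_def left_ideal_def right_ideal_def by simp
qed

lemma theta_ideal_subset_I_theta: "theta_ideal t scale I \<Longrightarrow> I \<subseteq> V \<Longrightarrow> I \<subseteq> I_theta t scale V"
  unfolding I_theta_def theta_ideal_def two_sided_ideal_def
  by (cases t) (auto intro: span_base)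

lemma left_ideal_subset_I_theta_pre_two_sided:
  "left_ideal scale I \<Longrightarrow> I \<subseteq> V \<Longrightarrow> I \<subseteq> I_theta PreTwoSidedT scale V"
  unfolding I_theta_def by (auto intro: span_base)

lemma idempotent_mem_I_theta:
  assumes "subspace V" and mathieu: "theta_mathieu t V" and "e \<in> V" and "idempotent e"
  shows "e \<in> I_theta t scale V"
proof -
  have powers: "\<forall>m\<ge>1. e ^ m \<in> V"
    using \<open>e \<in> V\<close> idempotent_power[OF \<open>idempotent e\<close>] by simp
  have left: "range (\<lambda>b. b * e) \<subseteq> V" if "left_mathieu V"
  proof -
    have "b * e \<in> V" for b
      using idempotent_eventually_power[OF \<open>idempotent e\<close>, of "\<lambda>x. b * x \<in> V"] that powers
      unfolding left_mathieu_def by blast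
    then show ?thesis by blast
  qed
  have right: "range (\<lambda>b. e * b) \<subseteq> V" if "right_mathieu V"
  proof -
    have "e * b \<in> V" for b
      using idempotent_eventually_power[OF \<open>idempotent e\<close>, of "\<lambda>x. x * b \<in> V"] that powers
      unfolding right_mathieu_def by blast
    then show ?thesis by blast
  qed
  have two_sided: "span (range (\<lambda>(b, c). b * e * c)) \<subseteq> V" if "two_sided_mathieu V"
  proof -
    have "b * e * c \<in> V" for b c
      using idempotent_eventually_power[OF \<open>idempotent e\<close>, of "\<lambda>x. b * x * c \<in> V"] that powers
      unfolding two_sided_mathieu_def by blast
    then show ?thesis
      using \<open>subspace V\<close> by (intro span_minimal) auto
  qed
  have e_left: "e \<in> range (\<lambda>b. b * e)" and e_right: "e \<in> range (\<lambda>b. e * b)"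
    by (rule range_eqI[where x=1], simp)+
  have e_two_sided: "e \<in> span (range (\<lambda>(b, c). b * e * c))"
    by (rule span_base, rule range_eqI[where x="(1, 1)"]) simp
  show ?thesis
  proof (cases t)
    case LeftT
    then show ?thesis
      using mathieu left e_left theta_ideal_subset_I_theta[OF _ left, of t] left_ideal_range_mult
      unfolding theta_mathieu_def theta_ideal_def by auto
  next
    case RightT
    then show ?thesis
      using mathieu right e_right theta_ideal_subset_I_theta[OF _ right, of t] right_ideal_range_mult
      unfolding theta_mathieu_def theta_ideal_def by auto
  next
    case PreTwoSidedT
    then show ?thesis
      using mathieu left e_left left_ideal_subset_I_theta_pre_two_sided[OF left_ideal_range_mult left]
      unfolding theta_mathieu_def by auto
  next
    case TwoSidedT
    then show ?thesis
      using mathieu two_sided e_two_sided two_sided_ideal_span_sandwich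
        theta_ideal_subset_I_theta[OF _ two_sided, of t]
      unfolding theta_mathieu_def theta_ideal_def by auto
  qed
qed

theorem theta_mathieu_iff_no_idempotent:
  assumes "subspace V" and algebraic: "\<forall>a\<in>radical V. algebraic_elem scale a"
    and "I_theta t scale V = {0}"
  shows "theta_mathieu t V \<longleftrightarrow> (\<forall>e\<in>V. idempotent e \<longrightarrow> e = 0)"
proof
  show "\<forall>e\<in>V. idempotent e \<longrightarrow> e = 0" if "theta_mathieu t V"
    using idempotent_mem_I_theta[OF \<open>subspace V\<close> that] \<open>I_theta t scale V = {0}\<close> by blast
next
  assume no_idempotent: "\<forall>e\<in>V. idempotent e \<longrightarrow> e = 0"
  show "theta_mathieu t V"
  proof (rule theta_mathieu_if_powers_nilpotent)
    show "0 \<in> V" using \<open>subspace V\<close> by (rule subspace_0)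
    fix a assume powers: "\<forall>m\<ge>1. a ^ m \<in> V"
    then have "algebraic_elem scale a"
      using algebraic unfolding radical_def by blast
    then show "\<exists>k. a ^ k = 0"
      using nilpotent_if_powers_in_subspace[OF \<open>subspace V\<close> no_idempotent powers] by blast
  qed
qed

lemma I_theta_eq_zero_if_simple:
  assumes "t \<noteq> PreTwoSidedT" and "\<forall>I. theta_ideal t scale I \<longrightarrow> I = {0} \<or> I = UNIV"
    and "V \<noteq> UNIV"
  shows "I_theta t scale V = {0}"
proof -
  have "\<Union>{I. theta_ideal t scale I \<and> I \<subseteq> V} \<subseteq> {0}"
    using assms(2,3) by blast
  then have "span (\<Union>{I. theta_ideal t scale I \<and> I \<subseteq> V}) \<subseteq> {0}"
    by (intro span_minimal) auto
  then show ?thesis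
    using assms(1) span_zero unfolding I_theta_def by auto
qed

end

theorem proposition4p5:
  fixes scale :: "'k::field \<Rightarrow> 'a::ring_1 \<Rightarrow> 'a"
    and t :: mtype
  assumes alg: "is_algebra scale"
  shows "(\<forall>V. module.subspace scale V \<and>
              (\<forall>a\<in>radical V. algebraic_elem scale a) \<and>
              I_theta t scale V = {0}
            \<longrightarrow> (theta_mathieu t V \<longleftrightarrow> (\<forall>e\<in>V. idempotent e \<longrightarrow> e = 0)))
       \<and> (t \<noteq> PreTwoSidedT \<and> algebraic_algebra scale \<and>
            (\<forall>I. theta_ideal t scale I \<longrightarrow> I = {0} \<or> I = UNIV)
          \<longrightarrow> (\<forall>M. module.subspace scale M \<and> M \<noteq> {0} \<and> M \<noteq> UNIV
                 \<longrightarrow> (theta_mathieu t M \<longleftrightarrow> (\<forall>e\<in>M. idempotent e \<longrightarrow> e = 0))))"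
proof -
  interpret k_algebra scale
    using alg by (simp add: k_algebra_iff_is_algebra)
  show ?thesis
  proof (intro conjI allI impI; elim conjE)
    fix V assume "subspace V" "\<forall>a\<in>radical V. algebraic_elem scale a" "I_theta t scale V = {0}"
    then show "theta_mathieu t V \<longleftrightarrow> (\<forall>e\<in>V. idempotent e \<longrightarrow> e = 0)"
      by (rule theta_mathieu_iff_no_idempotent)
  next
    fix M
    assume "t \<noteq> PreTwoSidedT" and "algebraic_algebra scale"
      and "\<forall>I. theta_ideal t scale I \<longrightarrow> I = {0} \<or> I = UNIV"
      and "subspace M" and "M \<noteq> {0}" and "M \<noteq> UNIV"
    then show "theta_mathieu t M \<longleftrightarrow> (\<forall>e\<in>M. idempotent e \<longrightarrow> e = 0)"
      by (intro theta_mathieu_iff_no_idempotent I_theta_eq_zero_if_simple)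
        (simp_all add: algebraic_algebra_def)
  qed
qed

end
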